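(* Let $(J,S)$ be an irreducible and ergodic homogeneous $d$-dimensional multi-time Markov renewal chain, and let $\nu$ be the stationary distribution of the embedded chain $J$. Then for all $j\in E$ and $1\le u\le d$, $$\mu^{(u,u)}_{jj}=\frac{\sum_{i=1}^s\nu_i m^{[u,u]}_i}{\nu_j}+2\,\frac{\sum_{i=1}^s\sum_{r\ne j}\nu_i p_{ir}m^{[u]}_{ir}\mu^{(u)}_{rj}}{\nu_j}.$$
   Context: $E=\{1,\dots,s\}$; $\mathbb{N}^d$ has the componentwise partial order, $k<l$ meaning $k\le l$, $k\ne l$. A homogeneous $d$-dimensional multi-time Markov renewal chain is a process $(J_n,S_n)_{n\in\mathbb{N}}$, $J_n\in E$, $S_n=(S^{[1]}_n,\dots,S^{[d]}_n)\in\mathbb{N}^d$, $S_0=0_d$, $S_n<S_{n+1}$, with a.s. $\mathbb{P}(J_{n+1}=j,S_{n+1}-S_n=k\mid J_{0:n},S_{0:n})=q_{J_nj}(k)$, $q_{ij}(k)=\mathbb{P}(J_{n+1}=j,S_{n+1}-S_n=k\mid J_n=i)$ independent of $n$. $X_{n+1}=S_{n+1}-S_n$, coordinates $X^{[u]}_{n+1}$. $p_{ij}=\sum_kq_{ij}(k)$. $\mathbb{E}_i$: expectation given $J_0=i$. $m^{[u,u]}_i=\mathbb{E}[(X^{[u]}_{n+1})^2\mid J_n=i]$, $m^{[u]}_{ir}=\mathbb{E}[X^{[u]}_{n+1}\mid J_n=i,J_{n+1}=r]$. With $m_j=\min\{l\ge1:J_l=j\}$ and $T^{[u]}_j=S^{[u]}_{m_j}$: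 $\mu^{(u)}_{ij}=\mathbb{E}_i[T^{[u]}_j]$, $\mu^{(u,u)}_{ij}=\mathbb{E}_i[(T^{[u]}_j)^2]$. Irreducible: $J$ irreducible. Ergodic: for each $u$, the marginal one-dimensional-time Markov renewal chain $(J,S^{[u]})$ (kernel $q^{[u]}_{ij}(k)=\sum_{k_{1:d}:k_u=k}q_{ij}(k_{1:d})$) is positive recurrent (all return times $T^{[u]}_j$ a.s. finite with finite mean) and aperiodic (each return time distribution has period $1$). *)

theory Defs
  imports "HOL-Probability.Probability"
begin

text \<open>State space E = {1..s}; multi-times are vectors in nat^'d (d = CARD('d)).
  The semi-Markov kernel is q i j k = P(J_{n+1}=j, S_{n+1}-S_n = k | J_n = i).\<close>

definition stE :: "nat \<Rightarrow> nat set" where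
  "stE s = {1..s}"

definition vless :: "nat^'d \<Rightarrow> nat^'d \<Rightarrow> bool" where
  "vless k l \<longleftrightarrow> (\<forall>u. k $ u \<le> l $ u) \<and> k \<noteq> l"

definition incr :: "(nat \<Rightarrow> 'w \<Rightarrow> nat^'d) \<Rightarrow> nat \<Rightarrow> 'w \<Rightarrow> nat^'d" where
  "incr S n \<omega> = (\<chi> u. S (Suc n) \<omega> $ u - S n \<omega> $ u)"

definition sm_kernel :: "nat \<Rightarrow> (nat \<Rightarrow> nat \<Rightarrow> nat^'d \<Rightarrow> real) \<Rightarrow> bool" where
  "sm_kernel s q \<longleftrightarrow>
     (\<forall>i j k. q i j k \<ge> 0) \<and> (\<forall>i j. q i j 0 = 0) \<and>
     (\<forall>i\<in>stE s. ((\<lambda>(j,k). q i j k) has_sum 1) (stE s \<times> UNIV))"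

text \<open>M i is the law of the chain started in J_0 = i (so expectations w.r.t. M i are E_i).
  The conditional-probability (Markov renewal) property is stated in its discrete form:
  for every history, P(history, J_{n+1}=j, X_{n+1}=k) = q (J_n) j k * P(history).\<close>
definition MTMRC ::
  "nat \<Rightarrow> (nat \<Rightarrow> nat \<Rightarrow> nat^'d \<Rightarrow> real) \<Rightarrow> (nat \<Rightarrow> 'w measure)
    \<Rightarrow> (nat \<Rightarrow> 'w \<Rightarrow> nat) \<Rightarrow> (nat \<Rightarrow> 'w \<Rightarrow> nat^'d) \<Rightarrow> bool" where
  "MTMRC s q M J S \<longleftrightarrow> sm_kernel s q \<and>
     (\<forall>i\<in>stE s. prob_space (M i) \<and>
        (\<forall>n. J n \<in> measurable (M i) (count_space UNIV)) \<and>
        (\<forall>n. S n \<in> measurable (M i) (count_space UNIV)) \<and>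
        (\<forall>\<omega>\<in>space (M i). J 0 \<omega> = i \<and> S 0 \<omega> = 0 \<and>
            (\<forall>n. J n \<omega> \<in> stE s \<and> vless (S n \<omega>) (S (Suc n) \<omega>))) \<and>
        (\<forall>n (js :: nat \<Rightarrow> nat) (ks :: nat \<Rightarrow> nat^'d) j k.
           measure (M i) {\<omega>\<in>space (M i). (\<forall>m\<le>n. J m \<omega> = js m \<and> S m \<omega> = ks m) \<and>
                                        J (Suc n) \<omega> = j \<and> incr S n \<omega> = k}
           = q (js n) j k * measure (M i) {\<omega>\<in>space (M i). \<forall>m\<le>n. J m \<omega> = js m \<and> S m \<omega> = ks m}))"

definition pker :: "(nat \<Rightarrow> nat \<Rightarrow> nat^'d \<Rightarrow> real) \<Rightarrow> nat \<Rightarrow> nat \<Rightarrow> real" where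
  "pker q i j = (\<Sum>\<^sub>\<infinity>k. q i j k)"

fun pkpow :: "nat \<Rightarrow> (nat \<Rightarrow> nat \<Rightarrow> nat^'d \<Rightarrow> real) \<Rightarrow> nat \<Rightarrow> nat \<Rightarrow> nat \<Rightarrow> real" where
  "pkpow s q 0 i j = (if i = j then 1 else 0)"
| "pkpow s q (Suc n) i j = (\<Sum>r\<in>stE s. pkpow s q n i r * pker q r j)"

definition irreducible_J :: "nat \<Rightarrow> (nat \<Rightarrow> nat \<Rightarrow> nat^'d \<Rightarrow> real) \<Rightarrow> bool" where
  "irreducible_J s q \<longleftrightarrow> (\<forall>i\<in>stE s. \<forall>j\<in>stE s. \<exists>n. pkpow s q n i j > 0)"

definition stationary :: "nat \<Rightarrow> (nat \<Rightarrow> nat \<Rightarrow> nat^'d \<Rightarrow> real) \<Rightarrow> (nat \<Rightarrow> real) \<Rightarrow> bool" where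
  "stationary s q \<nu> \<longleftrightarrow> (\<forall>i\<in>stE s. \<nu> i \<ge> 0) \<and> (\<Sum>i\<in>stE s. \<nu> i) = 1 \<and>
     (\<forall>j\<in>stE s. \<nu> j = (\<Sum>i\<in>stE s. \<nu> i * pker q i j))"

definition Tret :: "(nat \<Rightarrow> 'w \<Rightarrow> nat) \<Rightarrow> (nat \<Rightarrow> 'w \<Rightarrow> nat^'d) \<Rightarrow> 'd \<Rightarrow> nat \<Rightarrow> 'w \<Rightarrow> ennreal" where
  "Tret J S u j \<omega> = (if \<exists>l\<ge>1. J l \<omega> = j
      then of_nat (S (LEAST l. l \<ge> 1 \<and> J l \<omega> = j) \<omega> $ u) else \<infinity>)"

definition mu1 :: "(nat \<Rightarrow> 'w measure) \<Rightarrow> (nat \<Rightarrow> 'w \<Rightarrow> nat) \<Rightarrow> (nat \<Rightarrow> 'w \<Rightarrow> nat^'d) \<Rightarrow> 'd \<Rightarrow> nat \<Rightarrow> nat \<Rightarrow> ennreal" where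
  "mu1 M J S u i j = (\<integral>\<^sup>+\<omega>. Tret J S u j \<omega> \<partial>M i)"

definition mu2 :: "(nat \<Rightarrow> 'w measure) \<Rightarrow> (nat \<Rightarrow> 'w \<Rightarrow> nat) \<Rightarrow> (nat \<Rightarrow> 'w \<Rightarrow> nat^'d) \<Rightarrow> 'd \<Rightarrow> nat \<Rightarrow> nat \<Rightarrow> ennreal" where
  "mu2 M J S u i j = (\<integral>\<^sup>+\<omega>. (Tret J S u j \<omega>)^2 \<partial>M i)"

text \<open>m^{[u,u]}_i = E[(X^{[u]}_{n+1})^2 | J_n = i], computed from the kernel\<close>
definition m2 :: "nat \<Rightarrow> (nat \<Rightarrow> nat \<Rightarrow> nat^'d \<Rightarrow> real) \<Rightarrow> 'd \<Rightarrow> nat \<Rightarrow> ennreal" where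
  "m2 s q u i = (\<Sum>j\<in>stE s. \<Sum>\<^sub>\<infinity>k. of_nat ((k $ u)^2) * ennreal (q i j k))"

text \<open>m^{[u]}_{ir} = E[X^{[u]}_{n+1} | J_n = i, J_{n+1} = r], computed from the kernel\<close>
definition m1 :: "(nat \<Rightarrow> nat \<Rightarrow> nat^'d \<Rightarrow> real) \<Rightarrow> 'd \<Rightarrow> nat \<Rightarrow> nat \<Rightarrow> ennreal" where
  "m1 q u i r = (\<Sum>\<^sub>\<infinity>k. of_nat (k $ u) * ennreal (q i r k)) / ennreal (pker q i r)"

text \<open>ergodic: each marginal one-dimensional-time MRC (J, S^{[u]}) is positive recurrent and aperiodic\<close>
definition ergodic ::
  "nat \<Rightarrow> (nat \<Rightarrow> 'w measure) \<Rightarrow> (nat \<Rightarrow> 'w \<Rightarrow> nat) \<Rightarrow> (nat \<Rightarrow> 'w \<Rightarrow> nat^'d) \<Rightarrow> bool" where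
  "ergodic s M J S \<longleftrightarrow> (\<forall>u. \<forall>j\<in>stE s.
      (AE \<omega> in M j. Tret J S u j \<omega> < \<infinity>) \<and>
      mu1 M J S u j j < \<infinity> \<and>
      Gcd {k::nat. k > 0 \<and> measure (M j) {\<omega>\<in>space (M j). Tret J S u j \<omega> = of_nat k} > 0} = 1)"

end

theory Submission
  imports Defs
begin

text \<open>
  The return time T = T^[u]_j is the sum of the increments X^[u]_(m+1)
  over the steps m taken before the chain is back in j. Squaring T gives diagonal terms
  (X^[u]_(m+1))^2 and cross terms X^[u]_(m+1) times the rest of the excursion. Conditioning on the
  history up to step m + 1 (the Markov renewal property) replaces the rest of the excursion by the
  mean return time mu^(u) from J_(m+1) to j, so that
    E_j T^2 = sum_i G_i (m^[u,u]_i + 2 sum_(r ~= j) p_ir m^[u]_ir mu^(u)_rj),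
  where G_i is the expected number of visits to i during an excursion from j. Since j is recurrent,
  G is an invariant measure of the embedded chain with G_j = 1; by irreducibility it is proportional
  to nu, hence G_i = nu_i / nu_j.
\<close>

section \<open>Sums and integrals over countable spaces\<close>

lemma nn_integral_countable_valued:
  fixes Y :: "'w \<Rightarrow> 'a::countable" and F :: "'a \<Rightarrow> ennreal"
  assumes [measurable]: "Y \<in> measurable N (count_space UNIV)"
  shows "(\<integral>\<^sup>+\<omega>. F (Y \<omega>) \<partial>N) = (\<integral>\<^sup>+y. F y * emeasure N {\<omega>\<in>space N. Y \<omega> = y} \<partial>count_space UNIV)"
proof -
  have "(\<integral>\<^sup>+\<omega>. F (Y \<omega>) \<partial>N)
      = (\<integral>\<^sup>+\<omega>. (\<integral>\<^sup>+y. F y * indicator {\<omega>\<in>space N. Y \<omega> = y} \<omega> \<partial>count_space UNIV) \<partial>N)"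
  proof (rule nn_integral_cong)
    fix \<omega> assume "\<omega> \<in> space N"
    then have "(\<integral>\<^sup>+y. F y * indicator {\<omega>\<in>space N. Y \<omega> = y} \<omega> \<partial>count_space UNIV)
        = (\<integral>\<^sup>+y. F y * indicator {Y \<omega>} y \<partial>count_space UNIV)"
      by (intro nn_integral_cong) (auto split: split_indicator)
    then show "F (Y \<omega>) = (\<integral>\<^sup>+y. F y * indicator {\<omega>\<in>space N. Y \<omega> = y} \<omega> \<partial>count_space UNIV)"
      by simp
  qed
  also have "\<dots> = (\<integral>\<^sup>+y. (\<integral>\<^sup>+\<omega>. F y * indicator {\<omega>\<in>space N. Y \<omega> = y} \<omega> \<partial>N) \<partial>count_space UNIV)"
    by (rule nn_integral_count_space_nn_integral) auto
  also have "\<dots> = (\<integral>\<^sup>+y. F y * emeasure N {\<omega>\<in>space N. Y \<omega> = y} \<partial>count_space UNIV)"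
    by (intro nn_integral_cong nn_integral_cmult_indicator) auto
  finally show ?thesis .
qed

lemma nn_integral_count_space_pair:
  fixes f :: "'a::countable \<times> 'b::countable \<Rightarrow> ennreal"
  shows "(\<integral>\<^sup>+p. f p \<partial>count_space UNIV) = (\<integral>\<^sup>+x. \<integral>\<^sup>+y. f (x, y) \<partial>count_space UNIV \<partial>count_space UNIV)"
proof -
  have "count_space (UNIV :: 'a set) \<Otimes>\<^sub>M count_space (UNIV :: 'b set) = count_space UNIV"
    using pair_measure_countable[of "UNIV :: 'a set" "UNIV :: 'b set"] by simp
  moreover have "sigma_finite_measure (count_space (UNIV :: 'b set))"
    by (rule sigma_finite_measure_count_space_countable) simp
  ultimately show ?thesis
    using sigma_finite_measure.nn_integral_fst[of "count_space UNIV" f "count_space UNIV"] by simp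
qed

lemma nn_integral_count_space_le_infsum:
  fixes f :: "'a::countable \<Rightarrow> ennreal"
  shows "(\<integral>\<^sup>+x. f x \<partial>count_space UNIV) \<le> infsum f UNIV"
proof -
  define A where "A n = {x :: 'a. to_nat x < n}" for n
  have finite_A: "finite (A n)" for n
    by (rule finite_subset[of _ "from_nat ` {..<n}"])
       (auto simp: A_def intro!: image_eqI[where x = "to_nat _"])
  have "(\<integral>\<^sup>+x. f x \<partial>count_space UNIV) = (\<integral>\<^sup>+x. (SUP n. f x * indicator (A n) x) \<partial>count_space UNIV)"
  proof (intro nn_integral_cong antisym)
    fix x
    show "(SUP n. f x * indicator (A n) x) \<le> f x"
      by (rule SUP_least) (auto split: split_indicator)
    have "f x = f x * indicator (A (Suc (to_nat x))) x" by (simp add: A_def)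
    also have "\<dots> \<le> (SUP n. f x * indicator (A n) x)" by (rule SUP_upper) simp
    finally show "f x \<le> (SUP n. f x * indicator (A n) x)" .
  qed
  also have "\<dots> = (SUP n. (\<integral>\<^sup>+x. f x * indicator (A n) x \<partial>count_space UNIV))"
    by (rule nn_integral_monotone_convergence_SUP)
       (auto simp: incseq_def le_fun_def A_def split: split_indicator)
  also have "\<dots> = (SUP n. sum f (A n))"
    by (simp add: nn_integral_count_space_indicator[symmetric] nn_integral_count_space_finite finite_A)
  also have "\<dots> \<le> (SUP F\<in>{F. finite F \<and> F \<subseteq> UNIV}. sum f F)"
    by (rule SUP_least) (rule SUP_upper, simp add: finite_A)
  also have "\<dots> = infsum f UNIV"
    by (rule nonneg_infsum_complete[symmetric]) simp
  finally show ?thesis .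
qed

lemma infsum_ennreal_eq_nn_integral:
  fixes f :: "'a::countable \<Rightarrow> ennreal"
  shows "infsum f UNIV = (\<integral>\<^sup>+x. f x \<partial>count_space UNIV)"
proof (rule antisym[OF _ nn_integral_count_space_le_infsum])
  have "infsum f UNIV = (SUP F\<in>{F. finite F \<and> F \<subseteq> UNIV}. sum f F)"
    by (rule nonneg_infsum_complete) simp
  also have "\<dots> \<le> (\<integral>\<^sup>+x. f x \<partial>count_space UNIV)"
  proof (rule SUP_least)
    fix F :: "'a set" assume "F \<in> {F. finite F \<and> F \<subseteq> UNIV}"
    then have "sum f F = (\<integral>\<^sup>+x. f x * indicator F x \<partial>count_space UNIV)"
      by (simp add: nn_integral_count_space_indicator[symmetric] nn_integral_count_space_finite)
    also have "\<dots> \<le> (\<integral>\<^sup>+x. f x \<partial>count_space UNIV)"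
      by (intro nn_integral_mono) (auto split: split_indicator)
    finally show "sum f F \<le> (\<integral>\<^sup>+x. f x \<partial>count_space UNIV)" .
  qed
  finally show "infsum f UNIV \<le> (\<integral>\<^sup>+x. f x \<partial>count_space UNIV)" .
qed

lemma ennreal_infsum:
  fixes f :: "'a \<Rightarrow> real"
  assumes "f summable_on A" "\<And>x. x \<in> A \<Longrightarrow> 0 \<le> f x"
  shows "ennreal (infsum f A) = infsum (\<lambda>x. ennreal (f x)) A"
proof -
  have "ennreal (infsum f A) = (SUP F\<in>{F. finite F \<and> F \<subseteq> A}. ennreal (sum f F))"
    by (rule infsum_nonneg_is_SUPREMUM_ennreal[OF assms])
  also have "\<dots> = (SUP F\<in>{F. finite F \<and> F \<subseteq> A}. (\<Sum>x\<in>F. ennreal (f x)))"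
    using assms(2) by (intro SUP_cong refl) (auto intro!: sum_ennreal[symmetric])
  also have "\<dots> = infsum (\<lambda>x. ennreal (f x)) A"
    by (rule nonneg_infsum_complete[symmetric]) simp
  finally show ?thesis .
qed

lemma suminf_ennreal_split_head: "(\<Sum>n. f n :: ennreal) = f 0 + (\<Sum>n. f (Suc n))"
  using suminf_offset[of f 1] by (simp add: add.commute)

lemma power2_suminf_finite_support:
  fixes a :: "nat \<Rightarrow> ennreal"
  assumes "\<forall>m\<ge>N. a m = 0"
  shows "(\<Sum>m. a m)\<^sup>2 = (\<Sum>m. a m * (a m + 2 * (\<Sum>l. a (Suc (m + l)))))"
  using assms
proof (induction N arbitrary: a)
  case 0
  then show ?case by simp
next
  case (Suc N)
  let ?b = "\<lambda>m. a (Suc m)"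
  have IH: "(\<Sum>m. ?b m)\<^sup>2 = (\<Sum>m. ?b m * (?b m + 2 * (\<Sum>l. ?b (Suc (m + l)))))"
    using Suc by simp
  have square_sum: "(x + y)\<^sup>2 = x * (x + 2 * y) + y\<^sup>2" for x y :: ennreal
    by (simp add: power2_eq_square algebra_simps mult_2_right)
  have "(\<Sum>m. a m)\<^sup>2 = (a 0 + (\<Sum>m. ?b m))\<^sup>2"
    by (simp add: suminf_ennreal_split_head[of a])
  also have "\<dots> = a 0 * (a 0 + 2 * (\<Sum>m. ?b m)) + (\<Sum>m. ?b m)\<^sup>2"
    by (rule square_sum)
  also have "\<dots> = (\<Sum>m. a m * (a m + 2 * (\<Sum>l. a (Suc (m + l)))))"
    unfolding IH by (subst (2) suminf_ennreal_split_head) simp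
  finally show ?case .
qed

section \<open>Invariant measures of the embedded chain\<close>

locale nonneg_kernel =
  fixes s :: nat and q :: "nat \<Rightarrow> nat \<Rightarrow> nat^'d \<Rightarrow> real"
  assumes q_nonneg: "0 \<le> q i r k"
begin

abbreviation "E \<equiv> stE s"

lemma finite_E [simp]: "finite E"
  by (simp add: stE_def)

lemma pker_nonneg: "0 \<le> pker q i r"
  unfolding pker_def by (rule infsum_nonneg) (simp add: q_nonneg)

lemma pkpow_nonneg: "0 \<le> pkpow s q n i r"
  by (induction n arbitrary: r) (auto intro!: sum_nonneg mult_nonneg_nonneg pker_nonneg)

definition pker_invariant :: "(nat \<Rightarrow> ennreal) \<Rightarrow> bool" where
  "pker_invariant v \<longleftrightarrow> (\<forall>i\<in>E. v i = (\<Sum>r\<in>E. v r * ennreal (pker q r i)))"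

lemma pker_invariant_ennreal_iff:
  assumes nonneg: "\<And>i. i \<in> E \<Longrightarrow> 0 \<le> v i"
  shows "pker_invariant (\<lambda>i. ennreal (v i)) \<longleftrightarrow> (\<forall>i\<in>E. v i = (\<Sum>r\<in>E. v r * pker q r i))"
proof -
  have "(\<Sum>r\<in>E. ennreal (v r) * ennreal (pker q r i)) = ennreal (\<Sum>r\<in>E. v r * pker q r i)" for i
    using nonneg by (simp add: ennreal_mult'' pker_nonneg sum_ennreal[symmetric] del: sum_ennreal)
  moreover have "0 \<le> (\<Sum>r\<in>E. v r * pker q r i)" for i
    using nonneg by (simp add: pker_nonneg sum_nonneg)
  ultimately show ?thesis
    unfolding pker_invariant_def using nonneg by (simp add: ennreal_inj)
qed

lemma pker_invariant_pkpow:
  assumes inv: "pker_invariant v" and i: "i \<in> E"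
  shows "v i = (\<Sum>r\<in>E. v r * ennreal (pkpow s q n r i))"
  using i
proof (induction n arbitrary: i)
  case 0
  then show ?case by (simp add: if_distrib sum.delta cong: if_cong)
next
  case (Suc n)
  have "v i = (\<Sum>r'\<in>E. v r' * ennreal (pker q r' i))"
    using inv Suc.prems unfolding pker_invariant_def by blast
  also have "\<dots> = (\<Sum>r'\<in>E. (\<Sum>r\<in>E. v r * ennreal (pkpow s q n r r')) * ennreal (pker q r' i))"
    using Suc.IH by simp
  also have "\<dots> = (\<Sum>r\<in>E. v r * (\<Sum>r'\<in>E. ennreal (pkpow s q n r r') * ennreal (pker q r' i)))"
    unfolding sum_distrib_right sum_distrib_left by (subst sum.swap) (simp only: mult.assoc)
  also have "\<dots> = (\<Sum>r\<in>E. v r * ennreal (pkpow s q (Suc n) r i))"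
    by (simp add: ennreal_mult'' pkpow_nonneg pker_nonneg sum_ennreal[symmetric] del: sum_ennreal)
  finally show ?case .
qed

lemma pker_invariant_pkpow_le:
  assumes "pker_invariant v" "i \<in> E" "k \<in> E"
  shows "v i * ennreal (pkpow s q n i k) \<le> v k"
  using member_le_sum[OF \<open>i \<in> E\<close>, of "\<lambda>r. v r * ennreal (pkpow s q n r k)"]
    pker_invariant_pkpow[OF assms(1,3)] by simp

lemma pker_invariant_zero:
  assumes "irreducible_J s q" "pker_invariant v" "k \<in> E" "v k = 0" "i \<in> E"
  shows "v i = 0"
proof -
  obtain n where "pkpow s q n i k > 0"
    using assms unfolding irreducible_J_def by blast
  with pker_invariant_pkpow_le[OF assms(2,5,3), of n] \<open>v k = 0\<close> show ?thesis
    by simp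
qed

lemma pker_invariant_finite:
  assumes "irreducible_J s q" "pker_invariant v" "k \<in> E" "v k < \<infinity>" "i \<in> E"
  shows "v i < \<infinity>"
proof (rule ccontr)
  assume "\<not> v i < \<infinity>"
  moreover obtain n where "pkpow s q n i k > 0"
    using assms unfolding irreducible_J_def by blast
  ultimately show False
    using pker_invariant_pkpow_le[OF assms(2,5,3), of n] \<open>v k < \<infinity>\<close>
    by (simp add: less_top[symmetric] ennreal_mult_top top_unique)
qed

lemma stationary_pos:
  assumes irr: "irreducible_J s q" and st: "stationary s q \<nu>" and i: "i \<in> E"
  shows "0 < \<nu> i"
proof (rule ccontr)
  have nonneg: "\<And>i. i \<in> E \<Longrightarrow> 0 \<le> \<nu> i" and sum_1: "(\<Sum>i\<in>E. \<nu> i) = 1"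
    and "\<forall>i\<in>E. \<nu> i = (\<Sum>r\<in>E. \<nu> r * pker q r i)"
    using st unfolding stationary_def by blast+
  then have inv: "pker_invariant (\<lambda>i. ennreal (\<nu> i))"
    by (simp add: pker_invariant_ennreal_iff)
  assume "\<not> 0 < \<nu> i"
  then have "ennreal (\<nu> i) = 0" by (simp add: ennreal_eq_0_iff)
  then have "\<forall>k\<in>E. ennreal (\<nu> k) = 0"
    using pker_invariant_zero[OF irr inv i] by blast
  then have "\<forall>k\<in>E. \<nu> k = 0"
    using nonneg by simp
  then show False
    using sum_1 by simp
qed

text \<open>The minimal ratio \<open>c = min g/\<nu>\<close> makes \<open>g - c \<nu>\<close> a nonnegative invariant vector with a zero,
  hence zero everywhere.\<close>

lemma pker_invariant_proportional:
  assumes irr: "irreducible_J s q" and st: "stationary s q \<nu>"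
    and nonneg: "\<And>i. i \<in> E \<Longrightarrow> 0 \<le> g i"
    and inv: "\<forall>i\<in>E. g i = (\<Sum>r\<in>E. g r * pker q r i)"
  shows "\<exists>c. \<forall>i\<in>E. g i = c * \<nu> i"
proof -
  have pos: "\<And>i. i \<in> E \<Longrightarrow> 0 < \<nu> i"
    using stationary_pos[OF irr st] .
  have \<nu>_inv: "\<forall>i\<in>E. \<nu> i = (\<Sum>r\<in>E. \<nu> r * pker q r i)"
    using st unfolding stationary_def by blast
  have "E \<noteq> {}"
    using st unfolding stationary_def by auto
  define c where "c = Min ((\<lambda>i. g i / \<nu> i) ` E)"
  have "c \<in> (\<lambda>i. g i / \<nu> i) ` E"
    unfolding c_def using \<open>E \<noteq> {}\<close> by (intro Min_in) auto
  then obtain k where k: "k \<in> E" "c = g k / \<nu> k"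
    by blast
  define h where "h i = g i - c * \<nu> i" for i
  have h_nonneg: "0 \<le> h i" if "i \<in> E" for i
    using Min_le[of "(\<lambda>i. g i / \<nu> i) ` E" "g i / \<nu> i"] pos[OF that] that
    unfolding h_def c_def by (simp add: le_divide_eq)
  have "\<forall>i\<in>E. h i = (\<Sum>r\<in>E. h r * pker q r i)"
  proof
    fix i assume "i \<in> E"
    have "(\<Sum>r\<in>E. h r * pker q r i) = (\<Sum>r\<in>E. g r * pker q r i) - c * (\<Sum>r\<in>E. \<nu> r * pker q r i)"
      by (simp add: h_def left_diff_distrib sum_subtractf sum_distrib_left mult.assoc)
    also have "\<dots> = h i"
      using inv \<nu>_inv \<open>i \<in> E\<close> unfolding h_def by (simp only:)
    finally show "h i = (\<Sum>r\<in>E. h r * pker q r i)" ..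
  qed
  then have inv_h: "pker_invariant (\<lambda>i. ennreal (h i))"
    using h_nonneg by (simp add: pker_invariant_ennreal_iff)
  have h_k: "ennreal (h k) = 0"
    using k pos[OF k(1)] by (simp add: h_def)
  have "g i = c * \<nu> i" if "i \<in> E" for i
  proof -
    have "ennreal (h i) = 0"
      using pker_invariant_zero[OF irr inv_h k(1) h_k that] .
    then show ?thesis
      using h_nonneg[OF that] by (simp add: h_def ennreal_eq_0_iff)
  qed
  then show ?thesis by blast
qed

lemma pker_invariant_eq_stationary_ratio:
  assumes irr: "irreducible_J s q" and st: "stationary s q \<nu>"
    and inv: "pker_invariant v" and j: "j \<in> E" and vj: "v j = 1" and i: "i \<in> E"
  shows "v i = ennreal (\<nu> i / \<nu> j)"
proof -
  define g where "g i = enn2real (v i)" for i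
  have v_eq: "v i = ennreal (g i)" if "i \<in> E" for i
    using pker_invariant_finite[OF irr inv j _ that] vj by (simp add: g_def less_top)
  have "pker_invariant (\<lambda>i. ennreal (g i))"
    using inv unfolding pker_invariant_def by (simp add: v_eq cong: sum.cong)
  moreover have g_nonneg: "\<And>i. i \<in> E \<Longrightarrow> 0 \<le> g i"
    by (simp add: g_def)
  ultimately have "\<forall>i\<in>E. g i = (\<Sum>r\<in>E. g r * pker q r i)"
    by (simp add: pker_invariant_ennreal_iff)
  then have "\<exists>c. \<forall>i\<in>E. g i = c * \<nu> i"
    using pker_invariant_proportional[OF irr st, of g] g_nonneg by blast
  then obtain c where c: "\<forall>i\<in>E. g i = c * \<nu> i" ..
  have "c * \<nu> j = 1"
    using c j vj unfolding g_def by force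
  then have "c = 1 / \<nu> j"
    by (auto simp: eq_divide_eq)
  then have "g i = \<nu> i / \<nu> j"
    using c i by simp
  then show ?thesis
    using v_eq[OF i] by simp
qed

end

section \<open>Conditioning on the past of the chain\<close>

locale markov_renewal =
  fixes s :: nat and q :: "nat \<Rightarrow> nat \<Rightarrow> nat^'d \<Rightarrow> real" and M :: "nat \<Rightarrow> 'w measure"
    and J :: "nat \<Rightarrow> 'w \<Rightarrow> nat" and S :: "nat \<Rightarrow> 'w \<Rightarrow> nat^'d"
  assumes MTMRC: "MTMRC s q M J S"

sublocale markov_renewal \<subseteq> nonneg_kernel s q
  using MTMRC by unfold_locales (simp add: MTMRC_def sm_kernel_def)

context markov_renewal
begin

lemma prob_space_M [simp]: "i \<in> E \<Longrightarrow> prob_space (M i)"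
  and measurable_J [measurable]: "i \<in> E \<Longrightarrow> J n \<in> measurable (M i) (count_space UNIV)"
  and measurable_S [measurable]: "i \<in> E \<Longrightarrow> S n \<in> measurable (M i) (count_space UNIV)"
  and J_0: "i \<in> E \<Longrightarrow> \<omega> \<in> space (M i) \<Longrightarrow> J 0 \<omega> = i"
  and S_0: "i \<in> E \<Longrightarrow> \<omega> \<in> space (M i) \<Longrightarrow> S 0 \<omega> = 0"
  and J_in_E: "i \<in> E \<Longrightarrow> \<omega> \<in> space (M i) \<Longrightarrow> J n \<omega> \<in> E"
  and S_less: "i \<in> E \<Longrightarrow> \<omega> \<in> space (M i) \<Longrightarrow> vless (S n \<omega>) (S (Suc n) \<omega>)"
  and q_has_sum: "i \<in> E \<Longrightarrow> ((\<lambda>(r, k). q i r k) has_sum 1) (E \<times> UNIV)"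
  using MTMRC unfolding MTMRC_def sm_kernel_def by auto

lemma markov_property:
  "i \<in> E \<Longrightarrow>
    measure (M i) {\<omega>\<in>space (M i). (\<forall>m\<le>n. J m \<omega> = js m \<and> S m \<omega> = ks m) \<and>
                                 J (Suc n) \<omega> = r \<and> incr S n \<omega> = k}
    = q (js n) r k * measure (M i) {\<omega>\<in>space (M i). \<forall>m\<le>n. J m \<omega> = js m \<and> S m \<omega> = ks m}"
  using MTMRC unfolding MTMRC_def by blast

lemma measurable_incr [measurable]: "i \<in> E \<Longrightarrow> incr S n \<in> measurable (M i) (count_space UNIV)"
proof -
  have "incr S n = (\<lambda>\<omega>. (\<lambda>a b. \<chi> u. b $ u - a $ u) (S n \<omega>) (S (Suc n) \<omega>))"
    by (auto simp: incr_def)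
  then show "i \<in> E \<Longrightarrow> ?thesis" by simp
qed

lemma S_eq_sum_incr:
  assumes "i \<in> E" "\<omega> \<in> space (M i)"
  shows "S n \<omega> $ u = (\<Sum>m<n. incr S m \<omega> $ u)"
proof (induction n)
  case 0
  then show ?case using S_0[OF assms] by simp
next
  case (Suc n)
  have "S n \<omega> $ u \<le> S (Suc n) \<omega> $ u"
    using S_less[OF assms, of n] unfolding vless_def by blast
  then show ?case using Suc by (simp add: incr_def)
qed

text \<open>The history up to time \<open>n\<close> is encoded as a single countably-valued random variable, so that
  conditioning on it becomes a sum over its values.\<close>

definition hist :: "nat \<Rightarrow> 'w \<Rightarrow> (nat \<times> (nat^'d)) list" where
  "hist n \<omega> = map (\<lambda>m. (J m \<omega>, S m \<omega>)) [0..<Suc n]"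

lemma length_hist [simp]: "length (hist n \<omega>) = Suc n"
  by (simp add: hist_def)

lemma last_hist [simp]: "last (hist n \<omega>) = (J n \<omega>, S n \<omega>)"
  by (simp add: hist_def)

lemma measurable_hist [measurable]: "i \<in> E \<Longrightarrow> hist n \<in> measurable (M i) (count_space UNIV)"
proof (induction n)
  case 0
  have "hist 0 = (\<lambda>\<omega>. [(J 0 \<omega>, S 0 \<omega>)])" by (auto simp: hist_def)
  then show ?case using 0 by simp
next
  case (Suc n)
  have "hist (Suc n) = (\<lambda>\<omega>. hist n \<omega> @ [(J (Suc n) \<omega>, S (Suc n) \<omega>)])" by (auto simp: hist_def)
  then show ?case using Suc by simp
qed

lemma hist_eq_iff:
  "hist n \<omega> = h \<longleftrightarrow> length h = Suc n \<and> (\<forall>m\<le>n. J m \<omega> = fst (h ! m) \<and> S m \<omega> = snd (h ! m))"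
proof -
  have "hist n \<omega> = h \<longleftrightarrow> length h = Suc n \<and> (\<forall>m<Suc n. (J m \<omega>, S m \<omega>) = h ! m)"
    unfolding hist_def list_eq_iff_nth_eq by (auto simp del: upt_Suc)
  then show ?thesis by (auto simp: less_Suc_eq_le prod_eq_iff)
qed

lemma hist_eq_hist_iff: "hist n \<omega> = hist n \<omega>' \<longleftrightarrow> (\<forall>m\<le>n. J m \<omega> = J m \<omega>' \<and> S m \<omega> = S m \<omega>')"
  unfolding hist_eq_iff[of n \<omega> "hist n \<omega>'"] by (auto simp: hist_def nth_map_upt simp del: upt_Suc)

lemma emeasure_hist_step:
  assumes i: "i \<in> E"
  shows "emeasure (M i) {\<omega>\<in>space (M i). hist n \<omega> = h \<and> J (Suc n) \<omega> = r \<and> incr S n \<omega> = k}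
       = ennreal (q (fst (last h)) r k) * emeasure (M i) {\<omega>\<in>space (M i). hist n \<omega> = h}"
proof (cases "length h = Suc n")
  case True
  interpret prob_space "M i" using i by simp
  define js where "js m = fst (h ! m)" for m
  define ks where "ks m = snd (h ! m)" for m
  have last: "fst (last h) = js n"
    using True by (cases h rule: rev_cases) (auto simp: js_def nth_append)
  have step: "{\<omega>\<in>space (M i). hist n \<omega> = h \<and> J (Suc n) \<omega> = r \<and> incr S n \<omega> = k}
     = {\<omega>\<in>space (M i). (\<forall>m\<le>n. J m \<omega> = js m \<and> S m \<omega> = ks m) \<and> J (Suc n) \<omega> = r \<and> incr S n \<omega> = k}"
    and past: "{\<omega>\<in>space (M i). hist n \<omega> = h} = {\<omega>\<in>space (M i). (\<forall>m\<le>n. J m \<omega> = js m \<and> S m \<omega> = ks m)}"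
    using True by (auto simp: hist_eq_iff js_def ks_def)
  show ?thesis
    unfolding step past last emeasure_eq_measure markov_property[OF i]
    by (simp add: ennreal_mult q_nonneg)
next
  case False
  then have "\<And>\<omega>. hist n \<omega> \<noteq> h" by (metis length_hist)
  then show ?thesis by simp
qed

definition hist_determined :: "nat \<Rightarrow> ('w \<Rightarrow> ennreal) \<Rightarrow> bool" where
  "hist_determined n f \<longleftrightarrow> (\<exists>F. \<forall>\<omega>. f \<omega> = F (hist n \<omega>))"

lemma hist_determinedI:
  assumes "\<And>\<omega> \<omega>'. \<forall>m\<le>n. J m \<omega> = J m \<omega>' \<and> S m \<omega> = S m \<omega>' \<Longrightarrow> f \<omega> = f \<omega>'"
  shows "hist_determined n f"
  unfolding hist_determined_def
proof (intro exI allI)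
  fix \<omega>
  have "hist n (SOME \<omega>'. hist n \<omega>' = hist n \<omega>) = hist n \<omega>"
    by (rule someI) simp
  then show "f \<omega> = f (SOME \<omega>'. hist n \<omega>' = hist n \<omega>)"
    unfolding hist_eq_hist_iff by (intro assms) auto
qed

lemma hist_determinedD:
  assumes "hist_determined n f" "n \<le> n'" "\<forall>m\<le>n'. J m \<omega> = J m \<omega>' \<and> S m \<omega> = S m \<omega>'"
  shows "f \<omega> = f \<omega>'"
proof -
  obtain F where "\<And>\<omega>. f \<omega> = F (hist n \<omega>)"
    using assms(1) unfolding hist_determined_def by blast
  moreover have "hist n \<omega> = hist n \<omega>'"
    unfolding hist_eq_hist_iff using assms(2,3) by auto
  ultimately show ?thesis by simp
qed

lemma hist_determined_measurable:
  assumes "hist_determined n f" "i \<in> E"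
  shows "f \<in> borel_measurable (M i)"
proof -
  obtain F where "f = (\<lambda>\<omega>. F (hist n \<omega>))"
    using assms(1) unfolding hist_determined_def by blast
  then show ?thesis using assms(2) by simp
qed

lemma hist_determined_const [simp]: "hist_determined n (\<lambda>_. c)"
  by (rule hist_determinedI) simp

lemma hist_determined_step_mult:
  assumes "hist_determined n f"
  shows "hist_determined (Suc n) (\<lambda>\<omega>. f \<omega> * g (J (Suc n) \<omega>) (incr S n \<omega>))"
proof (rule hist_determinedI)
  fix \<omega> \<omega>' assume same: "\<forall>m\<le>Suc n. J m \<omega> = J m \<omega>' \<and> S m \<omega> = S m \<omega>'"
  then have "f \<omega> = f \<omega>'" and "incr S n \<omega> = incr S n \<omega>'"
    using hist_determinedD[OF assms _ same] by (auto simp: incr_def)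
  then show "f \<omega> * g (J (Suc n) \<omega>) (incr S n \<omega>) = f \<omega>' * g (J (Suc n) \<omega>') (incr S n \<omega>')"
    using same by simp
qed

text \<open>\<open>kernel_mean a g\<close> is the conditional mean of \<open>g J\<^sub>n\<^sub>+\<^sub>1 X\<^sub>n\<^sub>+\<^sub>1\<close> given \<open>J\<^sub>n = a\<close>.\<close>

definition kernel_mean :: "nat \<Rightarrow> (nat \<Rightarrow> nat^'d \<Rightarrow> ennreal) \<Rightarrow> ennreal" where
  "kernel_mean a g = (\<integral>\<^sup>+p. ennreal (q a (fst p) (snd p)) * g (fst p) (snd p) \<partial>count_space UNIV)"

lemma nn_integral_markov_step:
  assumes i: "i \<in> E" and "hist_determined n f"
  shows "(\<integral>\<^sup>+\<omega>. f \<omega> * g (J (Suc n) \<omega>) (incr S n \<omega>) \<partial>M i) = (\<integral>\<^sup>+\<omega>. f \<omega> * kernel_mean (J n \<omega>) g \<partial>M i)"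
proof -
  obtain F where F: "\<And>\<omega>. f \<omega> = F (hist n \<omega>)"
    using assms(2) unfolding hist_determined_def by blast
  let ?P = "\<lambda>h. emeasure (M i) {\<omega>\<in>space (M i). hist n \<omega> = h}"
  let ?P' = "\<lambda>h rk. emeasure (M i) {\<omega>\<in>space (M i). (hist n \<omega>, J (Suc n) \<omega>, incr S n \<omega>) = (h, rk)}"
  have "(\<integral>\<^sup>+\<omega>. f \<omega> * g (J (Suc n) \<omega>) (incr S n \<omega>) \<partial>M i)
      = (\<integral>\<^sup>+\<omega>. (\<lambda>(h, rk). F h * g (fst rk) (snd rk)) (hist n \<omega>, J (Suc n) \<omega>, incr S n \<omega>) \<partial>M i)"
    by (simp add: F)
  also have "\<dots> = (\<integral>\<^sup>+(h, rk). F h * g (fst rk) (snd rk) * ?P' h rk \<partial>count_space UNIV)"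
    using i by (subst nn_integral_countable_valued) (auto intro!: nn_integral_cong)
  also have "\<dots> = (\<integral>\<^sup>+h. \<integral>\<^sup>+rk. F h * g (fst rk) (snd rk) * ?P' h rk \<partial>count_space UNIV \<partial>count_space UNIV)"
    by (subst nn_integral_count_space_pair) simp
  also have "\<dots> = (\<integral>\<^sup>+h. F h * ?P h * kernel_mean (fst (last h)) g \<partial>count_space UNIV)"
  proof (intro nn_integral_cong)
    fix h :: "(nat \<times> (nat^'d)) list"
    have "(\<integral>\<^sup>+rk. F h * g (fst rk) (snd rk) * ?P' h rk \<partial>count_space UNIV)
        = (\<integral>\<^sup>+rk. (F h * ?P h) * (ennreal (q (fst (last h)) (fst rk) (snd rk)) * g (fst rk) (snd rk))
             \<partial>count_space UNIV)"
      using emeasure_hist_step[OF i, of n h] by (intro nn_integral_cong) (auto simp: mult_ac)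
    then show "(\<integral>\<^sup>+rk. F h * g (fst rk) (snd rk) * ?P' h rk \<partial>count_space UNIV)
        = F h * ?P h * kernel_mean (fst (last h)) g"
      unfolding kernel_mean_def by (simp add: nn_integral_cmult)
  qed
  also have "\<dots> = (\<integral>\<^sup>+\<omega>. F (hist n \<omega>) * kernel_mean (fst (last (hist n \<omega>))) g \<partial>M i)"
    using i by (subst nn_integral_countable_valued) (auto simp: mult_ac)
  also have "\<dots> = (\<integral>\<^sup>+\<omega>. f \<omega> * kernel_mean (J n \<omega>) g \<partial>M i)"
    by (simp add: F)
  finally show ?thesis .
qed

lemma q_outside_E:
  assumes a: "a \<in> E" and r: "r \<notin> E"
  shows "q a r k = 0"
proof -
  interpret prob_space "M a" using a by simp
  have start: "{\<omega>\<in>space (M a). \<forall>m\<le>0. J m \<omega> = a \<and> S m \<omega> = 0} = space (M a)"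
    using J_0[OF a] S_0[OF a] by auto
  have never: "{\<omega>\<in>space (M a). (\<forall>m\<le>0. J m \<omega> = a \<and> S m \<omega> = 0) \<and> J (Suc 0) \<omega> = r \<and> incr S 0 \<omega> = k} = {}"
    using J_in_E[OF a] r by blast
  show ?thesis
    using markov_property[OF a, of 0 "\<lambda>_. a" "\<lambda>_. 0" r k] unfolding start never by (simp add: prob_space)
qed

lemma kernel_mean_eq_sum:
  assumes a: "a \<in> E"
  shows "kernel_mean a g = (\<Sum>r\<in>E. \<integral>\<^sup>+k. ennreal (q a r k) * g r k \<partial>count_space UNIV)"
proof -
  have "kernel_mean a g = (\<integral>\<^sup>+r. \<integral>\<^sup>+k. ennreal (q a r k) * g r k \<partial>count_space UNIV \<partial>count_space UNIV)"
    unfolding kernel_mean_def by (subst nn_integral_count_space_pair) simp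
  also have "\<dots> = (\<Sum>r\<in>E. \<integral>\<^sup>+k. ennreal (q a r k) * g r k \<partial>count_space UNIV)"
    by (rule nn_integral_count_space') (auto simp: q_outside_E[OF a])
  finally show ?thesis .
qed

lemma q_summable:
  assumes a: "a \<in> E"
  shows "q a r summable_on UNIV"
proof (cases "r \<in> E")
  case True
  have "(\<lambda>(r, k). q a r k) summable_on (E \<times> UNIV)"
    using q_has_sum[OF a] by (auto simp: summable_on_def)
  then have "(\<lambda>(r, k). q a r k) summable_on (Pair r ` UNIV)"
    by (rule summable_on_subset_banach) (use True in auto)
  then have "((\<lambda>(r, k). q a r k) \<circ> Pair r) summable_on UNIV"
    by (subst summable_on_reindex[symmetric]) (auto simp: inj_on_def)
  then show ?thesis by (simp add: o_def)
next
  case False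
  then have "q a r = (\<lambda>_. 0)" using q_outside_E[OF a] by auto
  then show ?thesis by simp
qed

lemma pker_eq_nn_integral:
  assumes "a \<in> E"
  shows "ennreal (pker q a r) = (\<integral>\<^sup>+k. ennreal (q a r k) \<partial>count_space UNIV)"
  unfolding pker_def
  by (simp add: ennreal_infsum q_summable[OF assms] q_nonneg infsum_ennreal_eq_nn_integral)

lemma kernel_mean_indicator:
  assumes a: "a \<in> E" and i: "i \<in> E"
  shows "kernel_mean a (\<lambda>r k. if r = i then 1 else 0) = ennreal (pker q a i)"
proof -
  have "kernel_mean a (\<lambda>r k. if r = i then 1 else 0)
      = (\<Sum>r\<in>E. if r = i then \<integral>\<^sup>+k. ennreal (q a r k) \<partial>count_space UNIV else 0)"
    unfolding kernel_mean_eq_sum[OF a] by (intro sum.cong refl) auto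
  then show ?thesis
    using i by (simp add: pker_eq_nn_integral[OF a])
qed

lemma kernel_mean_eq_m2:
  assumes "i \<in> E"
  shows "kernel_mean i (\<lambda>r k. of_nat ((k $ u)\<^sup>2)) = m2 s q u i"
  unfolding kernel_mean_eq_sum[OF assms] m2_def
  by (simp add: infsum_ennreal_eq_nn_integral mult.commute)

lemma nn_integral_q_coord_eq_m1:
  assumes i: "i \<in> E"
  shows "(\<integral>\<^sup>+k. ennreal (q i r k) * of_nat (k $ u) \<partial>count_space UNIV) = ennreal (pker q i r) * m1 q u i r"
proof (cases "pker q i r = 0")
  case True
  have "ennreal (q i r k) = 0" for k
    using nn_integral_ge_point[of k UNIV "\<lambda>k. ennreal (q i r k)"] pker_eq_nn_integral[OF i, of r] True
    by simp
  then show ?thesis using True by simp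
next
  case False
  then have "0 < pker q i r" using pker_nonneg[of i r] by simp
  then show ?thesis
    unfolding m1_def infsum_ennreal_eq_nn_integral ennreal_times_divide
    by (simp add: mult.commute[of "ennreal _"] mult_divide_eq_ennreal)
qed

end

section \<open>Excursions from a fixed state\<close>

definition coord :: "'d \<Rightarrow> nat^'d \<Rightarrow> ennreal" where
  "coord u k = of_nat (k $ u)"

locale excursion = markov_renewal s q M J S
  for s :: nat and q :: "nat \<Rightarrow> nat \<Rightarrow> nat^'d \<Rightarrow> real" and M :: "nat \<Rightarrow> 'w measure"
    and J :: "nat \<Rightarrow> 'w \<Rightarrow> nat" and S :: "nat \<Rightarrow> 'w \<Rightarrow> nat^'d" +
  fixes j :: nat
  assumes j_in_E: "j \<in> stE s"
begin

definition avoids :: "nat \<Rightarrow> nat \<Rightarrow> 'w \<Rightarrow> bool" where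
  "avoids n l \<omega> \<longleftrightarrow> (\<forall>l'\<in>{Suc n..n + l}. J l' \<omega> \<noteq> j)"

lemma avoids_0 [simp]: "avoids n 0 \<omega>"
  by (simp add: avoids_def)

lemma avoids_add: "avoids n (l1 + l2) \<omega> \<longleftrightarrow> avoids n l1 \<omega> \<and> avoids (n + l1) l2 \<omega>"
proof -
  have "{Suc n..n + (l1 + l2)} = {Suc n..n + l1} \<union> {Suc (n + l1)..n + l1 + l2}" by auto
  then show ?thesis unfolding avoids_def by (simp only: ball_Un)
qed

lemma avoids_Suc: "avoids n (Suc l) \<omega> \<longleftrightarrow> J (Suc n) \<omega> \<noteq> j \<and> avoids (Suc n) l \<omega>"
  using avoids_add[of n 1 l \<omega>] by (simp add: avoids_def)

lemma measurable_avoids [measurable]: "i \<in> E \<Longrightarrow> Measurable.pred (M i) (avoids n l)"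
  unfolding avoids_def by measurable

lemma hist_determined_avoids: "n + l \<le> N \<Longrightarrow> hist_determined N (\<lambda>\<omega>. if avoids n l \<omega> then 1 else 0)"
  by (rule hist_determinedI) (auto simp: avoids_def)

definition avoid_incr :: "(nat^'d \<Rightarrow> ennreal) \<Rightarrow> nat \<Rightarrow> nat \<Rightarrow> 'w \<Rightarrow> ennreal" where
  "avoid_incr \<psi> n l \<omega> = (if avoids n l \<omega> then \<psi> (incr S (n + l) \<omega>) else 0)"

text \<open>\<open>avoid_mean \<psi> l r\<close> is the conditional mean of \<open>avoid_incr \<psi> n l\<close> given \<open>J\<^sub>n = r\<close>.\<close>

fun avoid_mean :: "(nat^'d \<Rightarrow> ennreal) \<Rightarrow> nat \<Rightarrow> nat \<Rightarrow> ennreal" where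
  "avoid_mean \<psi> 0 r = kernel_mean r (\<lambda>_ k. \<psi> k)"
| "avoid_mean \<psi> (Suc l) r = kernel_mean r (\<lambda>r' _. if r' \<noteq> j then avoid_mean \<psi> l r' else 0)"

lemma hist_determined_avoid_incr: "hist_determined (Suc (n + l)) (avoid_incr \<psi> n l)"
proof (rule hist_determinedI)
  fix \<omega> \<omega>' assume same: "\<forall>m\<le>Suc (n + l). J m \<omega> = J m \<omega>' \<and> S m \<omega> = S m \<omega>'"
  then have "avoids n l \<omega> = avoids n l \<omega>'" and "incr S (n + l) \<omega> = incr S (n + l) \<omega>'"
    by (auto simp: avoids_def incr_def)
  then show "avoid_incr \<psi> n l \<omega> = avoid_incr \<psi> n l \<omega>'"
    by (simp add: avoid_incr_def)
qed

lemma measurable_avoid_incr [measurable]: "i \<in> E \<Longrightarrow> avoid_incr \<psi> n l \<in> borel_measurable (M i)"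
  using hist_determined_avoid_incr by (rule hist_determined_measurable)

lemma nn_integral_avoid_incr:
  assumes i: "i \<in> E" and "hist_determined n f"
  shows "(\<integral>\<^sup>+\<omega>. f \<omega> * avoid_incr \<psi> n l \<omega> \<partial>M i) = (\<integral>\<^sup>+\<omega>. f \<omega> * avoid_mean \<psi> l (J n \<omega>) \<partial>M i)"
  using assms(2)
proof (induction l arbitrary: n f)
  case 0
  then show ?case
    using nn_integral_markov_step[OF i 0, of "\<lambda>_ k. \<psi> k"] by (simp add: avoid_incr_def)
next
  case (Suc l)
  let ?f = "\<lambda>\<omega>. f \<omega> * (\<lambda>r _. if r \<noteq> j then 1 else 0) (J (Suc n) \<omega>) (incr S n \<omega>)"
  have "(\<integral>\<^sup>+\<omega>. f \<omega> * avoid_incr \<psi> n (Suc l) \<omega> \<partial>M i) = (\<integral>\<^sup>+\<omega>. ?f \<omega> * avoid_incr \<psi> (Suc n) l \<omega> \<partial>M i)"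
    by (intro nn_integral_cong) (simp add: avoid_incr_def avoids_Suc)
  also have "\<dots> = (\<integral>\<^sup>+\<omega>. ?f \<omega> * avoid_mean \<psi> l (J (Suc n) \<omega>) \<partial>M i)"
    by (rule Suc.IH) (rule hist_determined_step_mult[OF Suc.prems])
  also have "\<dots> = (\<integral>\<^sup>+\<omega>. f \<omega> * (\<lambda>r _. if r \<noteq> j then avoid_mean \<psi> l r else 0) (J (Suc n) \<omega>) (incr S n \<omega>) \<partial>M i)"
    by (intro nn_integral_cong) simp
  also have "\<dots> = (\<integral>\<^sup>+\<omega>. f \<omega> * avoid_mean \<psi> (Suc l) (J n \<omega>) \<partial>M i)"
    by (subst nn_integral_markov_step[OF i Suc.prems]) simp
  finally show ?case .
qed

lemma avoid_mean_eq_nn_integral: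
  assumes r: "r \<in> E"
  shows "avoid_mean \<psi> l r = (\<integral>\<^sup>+\<omega>. avoid_incr \<psi> 0 l \<omega> \<partial>M r)"
proof -
  interpret prob_space "M r" using r by simp
  have "(\<integral>\<^sup>+\<omega>. avoid_incr \<psi> 0 l \<omega> \<partial>M r) = (\<integral>\<^sup>+\<omega>. 1 * avoid_mean \<psi> l (J 0 \<omega>) \<partial>M r)"
    using nn_integral_avoid_incr[OF r hist_determined_const[of 0 1], of \<psi> l] by simp
  also have "\<dots> = (\<integral>\<^sup>+\<omega>. avoid_mean \<psi> l r \<partial>M r)"
    by (intro nn_integral_cong) (simp add: J_0[OF r])
  finally show ?thesis by (simp add: emeasure_space_1)
qed

definition first_return :: "'w \<Rightarrow> nat" where
  "first_return \<omega> = (LEAST l. 1 \<le> l \<and> J l \<omega> = j)"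

lemma avoids_0_iff_less_first_return:
  assumes "\<exists>l\<ge>1. J l \<omega> = j"
  shows "avoids 0 m \<omega> \<longleftrightarrow> m < first_return \<omega>"
proof
  have "1 \<le> first_return \<omega> \<and> J (first_return \<omega>) \<omega> = j"
    unfolding first_return_def using assms by (rule LeastI_ex)
  moreover assume "avoids 0 m \<omega>"
  ultimately show "m < first_return \<omega>"
    unfolding avoids_def by (metis atLeastAtMost_iff add_0 not_less One_nat_def)
next
  assume m: "m < first_return \<omega>"
  show "avoids 0 m \<omega>"
    unfolding avoids_def
  proof
    fix l assume "l \<in> {Suc 0..0 + m}"
    then have "1 \<le> l" "l < first_return \<omega>" using m by auto
    then show "J l \<omega> \<noteq> j" unfolding first_return_def using not_less_Least by blast
  qed
qed

definition return_time :: "'d \<Rightarrow> 'w \<Rightarrow> ennreal" where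
  "return_time u \<omega> = (\<Sum>m. avoid_incr (coord u) 0 m \<omega>)"

definition mean_return :: "'d \<Rightarrow> nat \<Rightarrow> ennreal" where
  "mean_return u r = (\<Sum>l. avoid_mean (coord u) l r)"

lemma avoid_incr_eq_0_after_return:
  assumes "\<exists>l\<ge>1. J l \<omega> = j" "first_return \<omega> \<le> m"
  shows "avoid_incr \<psi> 0 m \<omega> = 0"
  using assms by (simp add: avoid_incr_def avoids_0_iff_less_first_return)

lemma Tret_eq_return_time:
  assumes "i \<in> E" "\<omega> \<in> space (M i)" and returns: "\<exists>l\<ge>1. J l \<omega> = j"
  shows "Tret J S u j \<omega> = return_time u \<omega>"
proof -
  have "return_time u \<omega> = (\<Sum>m<first_return \<omega>. avoid_incr (coord u) 0 m \<omega>)"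
    unfolding return_time_def
    by (rule suminf_finite) (auto simp: avoid_incr_eq_0_after_return[OF returns])
  also have "\<dots> = (\<Sum>m<first_return \<omega>. of_nat (incr S m \<omega> $ u))"
    by (intro sum.cong refl) (simp add: avoid_incr_def coord_def avoids_0_iff_less_first_return[OF returns])
  also have "\<dots> = of_nat (S (first_return \<omega>) \<omega> $ u)"
    by (simp add: S_eq_sum_incr[OF assms(1,2)])
  finally show ?thesis
    using returns unfolding Tret_def first_return_def by simp
qed

lemma mu1_eq_mean_return:
  assumes r: "r \<in> E" and null: "emeasure (M r) {\<omega>\<in>space (M r). \<not> (\<exists>l\<ge>1. J l \<omega> = j)} = 0"
  shows "mu1 M J S u r j = mean_return u r"
proof -
  have "AE \<omega> in M r. \<exists>l\<ge>1. J l \<omega> = j"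
    by (subst AE_iff_measurable[OF _ refl]) (use r null in measurable)
  then have "mu1 M J S u r j = (\<integral>\<^sup>+\<omega>. return_time u \<omega> \<partial>M r)"
    unfolding mu1_def by (intro nn_integral_cong_AE) (auto simp: Tret_eq_return_time[OF r])
  also have "\<dots> = (\<Sum>l. \<integral>\<^sup>+\<omega>. avoid_incr (coord u) 0 l \<omega> \<partial>M r)"
    unfolding return_time_def by (rule nn_integral_suminf) (use r in measurable)
  also have "\<dots> = mean_return u r"
    unfolding mean_return_def by (simp add: avoid_mean_eq_nn_integral[OF r])
  finally show ?thesis .
qed

text \<open>\<open>visits r\<close> is the expected number of visits to \<open>r\<close> at the times \<open>0, \<dots>, first_return - 1\<close>
  of an excursion from \<open>j\<close>.\<close>

definition visit_prob :: "nat \<Rightarrow> nat \<Rightarrow> ennreal" where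
  "visit_prob m r = emeasure (M j) {\<omega>\<in>space (M j). avoids 0 m \<omega> \<and> J m \<omega> = r}"

definition visits :: "nat \<Rightarrow> ennreal" where
  "visits r = (\<Sum>m. visit_prob m r)"

lemma nn_integral_split_J:
  assumes i: "i \<in> E" and [measurable]: "Measurable.pred (M i) P"
  shows "(\<integral>\<^sup>+\<omega>. (if P \<omega> then \<phi> (J m \<omega>) else 0) \<partial>M i)
       = (\<Sum>r\<in>E. \<phi> r * emeasure (M i) {\<omega>\<in>space (M i). P \<omega> \<and> J m \<omega> = r})"
proof -
  have "(\<integral>\<^sup>+\<omega>. (if P \<omega> then \<phi> (J m \<omega>) else 0) \<partial>M i)
      = (\<integral>\<^sup>+\<omega>. (\<Sum>r\<in>E. \<phi> r * indicator {\<omega>\<in>space (M i). P \<omega> \<and> J m \<omega> = r} \<omega>) \<partial>M i)"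
  proof (rule nn_integral_cong)
    fix \<omega> assume \<omega>: "\<omega> \<in> space (M i)"
    have "(\<Sum>r\<in>E. \<phi> r * indicator {\<omega>\<in>space (M i). P \<omega> \<and> J m \<omega> = r} \<omega>)
        = (\<Sum>r\<in>E. if r = J m \<omega> then (if P \<omega> then \<phi> (J m \<omega>) else 0) else 0)"
      using \<omega> by (intro sum.cong refl) (auto split: split_indicator)
    also have "\<dots> = (if P \<omega> then \<phi> (J m \<omega>) else 0)"
      using J_in_E[OF i \<omega>, of m] by (simp add: sum.delta)
    finally show "(if P \<omega> then \<phi> (J m \<omega>) else 0)
        = (\<Sum>r\<in>E. \<phi> r * indicator {\<omega>\<in>space (M i). P \<omega> \<and> J m \<omega> = r} \<omega>)" ..
  qed
  also have "\<dots> = (\<Sum>r\<in>E. \<phi> r * emeasure (M i) {\<omega>\<in>space (M i). P \<omega> \<and> J m \<omega> = r})"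
    using i by (subst nn_integral_sum) (auto intro!: sum.cong nn_integral_cmult_indicator)
  finally show ?thesis .
qed

lemma nn_integral_before_return_step:
  "(\<integral>\<^sup>+\<omega>. (if avoids 0 m \<omega> then g (J (Suc m) \<omega>) (incr S m \<omega>) else 0) \<partial>M j)
    = (\<Sum>i\<in>E. kernel_mean i g * visit_prob m i)"
proof -
  let ?I = "\<lambda>\<omega>. if avoids 0 m \<omega> then 1 else 0 :: ennreal"
  have "(\<integral>\<^sup>+\<omega>. (if avoids 0 m \<omega> then g (J (Suc m) \<omega>) (incr S m \<omega>) else 0) \<partial>M j)
      = (\<integral>\<^sup>+\<omega>. ?I \<omega> * g (J (Suc m) \<omega>) (incr S m \<omega>) \<partial>M j)"
    by (intro nn_integral_cong) simp
  also have "\<dots> = (\<integral>\<^sup>+\<omega>. ?I \<omega> * kernel_mean (J m \<omega>) g \<partial>M j)"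
    by (rule nn_integral_markov_step[OF j_in_E hist_determined_avoids]) simp
  also have "\<dots> = (\<integral>\<^sup>+\<omega>. (if avoids 0 m \<omega> then kernel_mean (J m \<omega>) g else 0) \<partial>M j)"
    by (intro nn_integral_cong) simp
  also have "\<dots> = (\<Sum>i\<in>E. kernel_mean i g * visit_prob m i)"
    unfolding visit_prob_def by (rule nn_integral_split_J[OF j_in_E]) (use j_in_E in measurable)
  finally show ?thesis .
qed

lemma visit_prob_0: "visit_prob 0 r = (if r = j then 1 else 0)"
proof -
  interpret prob_space "M j" using j_in_E by simp
  have "{\<omega>\<in>space (M j). avoids 0 0 \<omega> \<and> J 0 \<omega> = r} = (if r = j then space (M j) else {})"
    using J_0[OF j_in_E] by auto
  then show ?thesis
    unfolding visit_prob_def by (simp add: emeasure_space_1)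
qed

lemma visit_prob_Suc_j: "visit_prob (Suc m) j = 0"
proof -
  have "{\<omega>\<in>space (M j). avoids 0 (Suc m) \<omega> \<and> J (Suc m) \<omega> = j} = {}"
    by (auto simp: avoids_def)
  then show ?thesis
    unfolding visit_prob_def by (simp only: emeasure_empty)
qed

lemma visits_j [simp]: "visits j = 1"
  unfolding visits_def by (subst suminf_ennreal_split_head) (simp add: visit_prob_0 visit_prob_Suc_j)

lemma emeasure_avoids_J_Suc:
  assumes i: "i \<in> E"
  shows "emeasure (M j) {\<omega>\<in>space (M j). avoids 0 m \<omega> \<and> J (Suc m) \<omega> = i}
       = (\<Sum>r\<in>E. ennreal (pker q r i) * visit_prob m r)"
proof -
  have "emeasure (M j) {\<omega>\<in>space (M j). avoids 0 m \<omega> \<and> J (Suc m) \<omega> = i}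
      = (\<integral>\<^sup>+\<omega>. indicator {\<omega>\<in>space (M j). avoids 0 m \<omega> \<and> J (Suc m) \<omega> = i} \<omega> \<partial>M j)"
    by (rule nn_integral_indicator[symmetric]) (use j_in_E in measurable)
  also have "\<dots> = (\<integral>\<^sup>+\<omega>. (if avoids 0 m \<omega> then (\<lambda>r _. if r = i then 1 else 0) (J (Suc m) \<omega>) (incr S m \<omega>) else 0) \<partial>M j)"
    by (intro nn_integral_cong) (auto split: split_indicator)
  also have "\<dots> = (\<Sum>r\<in>E. kernel_mean r (\<lambda>r' _. if r' = i then 1 else 0) * visit_prob m r)"
    by (rule nn_integral_before_return_step)
  also have "\<dots> = (\<Sum>r\<in>E. ennreal (pker q r i) * visit_prob m r)"
    by (intro sum.cong refl) (simp add: kernel_mean_indicator i)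
  finally show ?thesis .
qed

lemma visit_prob_Suc:
  assumes "i \<in> E" "i \<noteq> j"
  shows "visit_prob (Suc m) i = (\<Sum>r\<in>E. ennreal (pker q r i) * visit_prob m r)"
proof -
  have "{\<omega>\<in>space (M j). avoids 0 (Suc m) \<omega> \<and> J (Suc m) \<omega> = i}
      = {\<omega>\<in>space (M j). avoids 0 m \<omega> \<and> J (Suc m) \<omega> = i}"
    using avoids_add[of 0 m 1] \<open>i \<noteq> j\<close> by (auto simp: avoids_def)
  then show ?thesis
    unfolding visit_prob_def using emeasure_avoids_J_Suc[OF assms(1)] by (simp add: visit_prob_def)
qed

lemma pker_mult_visit_prob_le:
  assumes "i \<in> E" "r \<in> E" "r \<noteq> j"
  shows "ennreal (pker q i r) * visit_prob m i \<le> visit_prob (Suc m) r"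
  unfolding visit_prob_Suc[OF assms(2,3)] using assms(1) by (intro member_le_sum) auto

lemma suminf_emeasure_first_return:
  "(\<Sum>m. emeasure (M j) {\<omega>\<in>space (M j). avoids 0 m \<omega> \<and> J (Suc m) \<omega> = j})
    = emeasure (M j) {\<omega>\<in>space (M j). \<exists>l\<ge>1. J l \<omega> = j}"
proof -
  let ?A = "\<lambda>m. {\<omega>\<in>space (M j). avoids 0 m \<omega> \<and> J (Suc m) \<omega> = j}"
  have "disjoint_family ?A"
    unfolding disjoint_family_on_def
  proof (intro ballI impI)
    fix m m' :: nat assume "m \<noteq> m'"
    then consider "m < m'" | "m' < m" by linarith
    then show "?A m \<inter> ?A m' = {}" by cases (auto simp: avoids_def)
  qed
  then have "(\<Sum>m. emeasure (M j) (?A m)) = emeasure (M j) (\<Union>m. ?A m)"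
    using j_in_E by (intro suminf_emeasure) auto
  also have "(\<Union>m. ?A m) = {\<omega>\<in>space (M j). \<exists>l\<ge>1. J l \<omega> = j}"
  proof (intro equalityI subsetI)
    fix \<omega> assume \<omega>: "\<omega> \<in> {\<omega>\<in>space (M j). \<exists>l\<ge>1. J l \<omega> = j}"
    then have returns: "\<exists>l\<ge>1. J l \<omega> = j" by auto
    have "1 \<le> first_return \<omega> \<and> J (first_return \<omega>) \<omega> = j"
      unfolding first_return_def using returns by (rule LeastI_ex)
    then have "\<omega> \<in> ?A (first_return \<omega> - 1)"
      using \<omega> avoids_0_iff_less_first_return[OF returns, of "first_return \<omega> - 1"] by auto
    then show "\<omega> \<in> (\<Union>m. ?A m)" by blast
  qed auto
  finally show ?thesis .
qed

lemma visits_pker_invariant: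
  assumes returns: "AE \<omega> in M j. \<exists>l\<ge>1. J l \<omega> = j"
  shows "pker_invariant visits"
  unfolding pker_invariant_def
proof
  fix i assume i: "i \<in> E"
  have "(\<Sum>r\<in>E. visits r * ennreal (pker q r i)) = (\<Sum>m. \<Sum>r\<in>E. ennreal (pker q r i) * visit_prob m r)"
    unfolding visits_def by (subst suminf_sum) (simp_all add: mult.commute)
  also have "\<dots> = visits i"
  proof (cases "i = j")
    case True
    interpret prob_space "M j" using j_in_E by simp
    have "(\<Sum>m. \<Sum>r\<in>E. ennreal (pker q r i) * visit_prob m r) = emeasure (M j) {\<omega>\<in>space (M j). \<exists>l\<ge>1. J l \<omega> = j}"
      unfolding True emeasure_avoids_J_Suc[OF j_in_E, symmetric] by (rule suminf_emeasure_first_return)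
    also have "\<dots> = 1"
      by (rule emeasure_eq_1_AE) (use j_in_E returns in auto)
    finally show ?thesis using True by simp
  next
    case False
    then show ?thesis
      unfolding visits_def by (subst (2) suminf_ennreal_split_head) (simp add: visit_prob_0 visit_prob_Suc[OF i])
  qed
  finally show "visits i = (\<Sum>r\<in>E. visits r * ennreal (pker q r i))" ..
qed

end

context excursion
begin

lemma no_return_mult_visit_prob_le:
  assumes r: "r \<in> E"
  shows "emeasure (M r) {\<omega>\<in>space (M r). \<not> (\<exists>l\<ge>1. J l \<omega> = j)} * visit_prob m r
       \<le> emeasure (M j) {\<omega>\<in>space (M j). avoids 0 (m + l) \<omega>}"
proof -
  let ?one = "\<lambda>_ :: nat^'d. 1 :: ennreal"
  define f where "f \<omega> = (if avoids 0 m \<omega> \<and> J m \<omega> = r then 1 else 0 :: ennreal)" for \<omega>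
  have f_hist: "hist_determined m f"
    unfolding f_def by (rule hist_determinedI) (auto simp: avoids_def)
  have [measurable]: "f \<in> borel_measurable (M j)"
    using f_hist j_in_E by (rule hist_determined_measurable)
  have "visit_prob m r = (\<integral>\<^sup>+\<omega>. indicator {\<omega>\<in>space (M j). avoids 0 m \<omega> \<and> J m \<omega> = r} \<omega> \<partial>M j)"
    unfolding visit_prob_def by (rule nn_integral_indicator[symmetric]) (use j_in_E in measurable)
  also have "\<dots> = (\<integral>\<^sup>+\<omega>. f \<omega> \<partial>M j)"
    by (intro nn_integral_cong) (simp add: f_def split: split_indicator)
  finally have visit_prob_eq: "visit_prob m r = (\<integral>\<^sup>+\<omega>. f \<omega> \<partial>M j)" .
  have "emeasure (M r) {\<omega>\<in>space (M r). \<not> (\<exists>l\<ge>1. J l \<omega> = j)}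
      = (\<integral>\<^sup>+\<omega>. indicator {\<omega>\<in>space (M r). \<not> (\<exists>l\<ge>1. J l \<omega> = j)} \<omega> \<partial>M r)"
    by (rule nn_integral_indicator[symmetric]) (use r in measurable)
  also have "\<dots> \<le> (\<integral>\<^sup>+\<omega>. avoid_incr ?one 0 l \<omega> \<partial>M r)"
    by (intro nn_integral_mono) (auto simp: avoid_incr_def avoids_def split: split_indicator)
  also have "\<dots> = avoid_mean ?one l r"
    by (rule avoid_mean_eq_nn_integral[OF r, symmetric])
  finally have "emeasure (M r) {\<omega>\<in>space (M r). \<not> (\<exists>l\<ge>1. J l \<omega> = j)} * visit_prob m r
      \<le> (\<integral>\<^sup>+\<omega>. f \<omega> \<partial>M j) * avoid_mean ?one l r"
    unfolding visit_prob_eq by (subst mult.commute) (rule mult_left_mono, simp_all)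
  also have "\<dots> = (\<integral>\<^sup>+\<omega>. f \<omega> * avoid_mean ?one l (J m \<omega>) \<partial>M j)"
    by (subst nn_integral_multc[symmetric]) (auto simp: f_def intro!: nn_integral_cong)
  also have "\<dots> = (\<integral>\<^sup>+\<omega>. f \<omega> * avoid_incr ?one m l \<omega> \<partial>M j)"
    by (rule nn_integral_avoid_incr[OF j_in_E f_hist, symmetric])
  also have "\<dots> \<le> (\<integral>\<^sup>+\<omega>. indicator {\<omega>\<in>space (M j). avoids 0 (m + l) \<omega>} \<omega> \<partial>M j)"
    by (intro nn_integral_mono) (auto simp: f_def avoid_incr_def avoids_add split: split_indicator)
  also have "\<dots> = emeasure (M j) {\<omega>\<in>space (M j). avoids 0 (m + l) \<omega>}"
    by (rule nn_integral_indicator) (use j_in_E in measurable)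
  finally show ?thesis .
qed

lemma emeasure_avoids_tendsto:
  "(\<lambda>n. emeasure (M j) {\<omega>\<in>space (M j). avoids 0 n \<omega>})
    \<longlonglongrightarrow> emeasure (M j) {\<omega>\<in>space (M j). \<not> (\<exists>l\<ge>1. J l \<omega> = j)}"
proof -
  interpret prob_space "M j" using j_in_E by simp
  have "{\<omega>\<in>space (M j). \<not> (\<exists>l\<ge>1. J l \<omega> = j)} = (\<Inter>n. {\<omega>\<in>space (M j). avoids 0 n \<omega>})"
    by (auto simp: avoids_def; fastforce)
  moreover have "(\<lambda>n. emeasure (M j) {\<omega>\<in>space (M j). avoids 0 n \<omega>})
      \<longlonglongrightarrow> emeasure (M j) (\<Inter>n. {\<omega>\<in>space (M j). avoids 0 n \<omega>})"
  proof (rule Lim_emeasure_decseq)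
    show "range (\<lambda>n. {\<omega>\<in>space (M j). avoids 0 n \<omega>}) \<subseteq> sets (M j)"
      using j_in_E by auto
    show "decseq (\<lambda>n. {\<omega>\<in>space (M j). avoids 0 n \<omega>})"
      by (auto simp: decseq_def avoids_def)
    show "emeasure (M j) {\<omega>\<in>space (M j). avoids 0 n \<omega>} \<noteq> \<infinity>" for n
      by simp
  qed
  ultimately show ?thesis by simp
qed

text \<open>Every state visited during an excursion from a recurrent state \<open>j\<close> leads back to \<open>j\<close> almost surely:
  otherwise the excursion itself would fail to return with positive probability.\<close>

lemma no_return_null_if_visited:
  assumes returns: "AE \<omega> in M j. \<exists>l\<ge>1. J l \<omega> = j"
    and r: "r \<in> E" and visited: "visit_prob m r \<noteq> 0"
  shows "emeasure (M r) {\<omega>\<in>space (M r). \<not> (\<exists>l\<ge>1. J l \<omega> = j)} = 0"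
proof -
  let ?x = "emeasure (M r) {\<omega>\<in>space (M r). \<not> (\<exists>l\<ge>1. J l \<omega> = j)}"
  have "?x * visit_prob m r \<le> emeasure (M j) {\<omega>\<in>space (M j). \<not> (\<exists>l\<ge>1. J l \<omega> = j)}"
  proof (rule LIMSEQ_le_const[OF emeasure_avoids_tendsto], intro exI allI impI)
    fix n assume "m \<le> n"
    then show "?x * visit_prob m r \<le> emeasure (M j) {\<omega>\<in>space (M j). avoids 0 n \<omega>}"
      using no_return_mult_visit_prob_le[OF r, of m "n - m"] by simp
  qed
  also have "\<dots> = 0"
    using returns by (subst (asm) AE_iff_measurable[OF _ refl]) (use j_in_E in measurable)
  finally show ?thesis
    using visited by simp
qed

lemma visits_mult_mean_return_eq_mu1:
  assumes returns: "AE \<omega> in M j. \<exists>l\<ge>1. J l \<omega> = j"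
    and i: "i \<in> E" and r: "r \<in> E" "r \<noteq> j"
  shows "visits i * ennreal (pker q i r) * mean_return u r = visits i * ennreal (pker q i r) * mu1 M J S u r j"
proof (cases "visits i * ennreal (pker q i r) = 0")
  case False
  then have "visits i \<noteq> 0" and pker: "ennreal (pker q i r) \<noteq> 0"
    by auto
  obtain m where "visit_prob m i \<noteq> 0"
  proof (rule ccontr)
    assume "\<not> thesis"
    then have "\<forall>m. visit_prob m i = 0" using that by blast
    then show False using \<open>visits i \<noteq> 0\<close> by (simp add: visits_def)
  qed
  then have "0 < ennreal (pker q i r) * visit_prob m i"
    using pker by (simp add: zero_less_iff_neq_zero)
  then have "visit_prob (Suc m) r \<noteq> 0"
    using pker_mult_visit_prob_le[OF i r, of m] by auto
  then have "mu1 M J S u r j = mean_return u r"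
    using mu1_eq_mean_return[OF r(1)] no_return_null_if_visited[OF returns r(1)] by blast
  then show ?thesis by simp
qed auto

section \<open>The second moment of the return time\<close>

lemma return_time_square:
  assumes returns: "\<exists>l\<ge>1. J l \<omega> = j"
  shows "(return_time u \<omega>)\<^sup>2 = (\<Sum>m. avoid_incr (coord u) 0 m \<omega> * avoid_incr (coord u) 0 m \<omega>
           + 2 * (avoid_incr (coord u) 0 m \<omega> * (\<Sum>l. avoid_incr (coord u) 0 (Suc (m + l)) \<omega>)))"
proof -
  have "(return_time u \<omega>)\<^sup>2 = (\<Sum>m. avoid_incr (coord u) 0 m \<omega>
          * (avoid_incr (coord u) 0 m \<omega> + 2 * (\<Sum>l. avoid_incr (coord u) 0 (Suc (m + l)) \<omega>)))"
    unfolding return_time_def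
    by (rule power2_suminf_finite_support) (auto intro: avoid_incr_eq_0_after_return[OF returns])
  then show ?thesis
    by (simp add: distrib_left mult.left_commute)
qed

lemma nn_integral_avoid_incr_square:
  "(\<integral>\<^sup>+\<omega>. avoid_incr (coord u) 0 m \<omega> * avoid_incr (coord u) 0 m \<omega> \<partial>M j)
    = (\<Sum>i\<in>E. m2 s q u i * visit_prob m i)"
proof -
  have "(\<integral>\<^sup>+\<omega>. avoid_incr (coord u) 0 m \<omega> * avoid_incr (coord u) 0 m \<omega> \<partial>M j)
      = (\<integral>\<^sup>+\<omega>. (if avoids 0 m \<omega> then (\<lambda>_ k. of_nat ((k $ u)\<^sup>2)) (J (Suc m) \<omega>) (incr S m \<omega>) else 0) \<partial>M j)"
    by (intro nn_integral_cong) (simp add: avoid_incr_def coord_def power2_eq_square)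
  also have "\<dots> = (\<Sum>i\<in>E. kernel_mean i (\<lambda>_ k. of_nat ((k $ u)\<^sup>2)) * visit_prob m i)"
    by (rule nn_integral_before_return_step)
  also have "\<dots> = (\<Sum>i\<in>E. m2 s q u i * visit_prob m i)"
    by (intro sum.cong refl) (simp only: kernel_mean_eq_m2)
  finally show ?thesis .
qed

lemma nn_integral_avoid_incr_cross:
  "(\<integral>\<^sup>+\<omega>. avoid_incr (coord u) 0 m \<omega> * (\<Sum>l. avoid_incr (coord u) 0 (Suc (m + l)) \<omega>) \<partial>M j)
    = (\<Sum>i\<in>E. kernel_mean i (\<lambda>r k. coord u k * (if r \<noteq> j then mean_return u r else 0)) * visit_prob m i)"
proof -
  define F where "F \<omega> = (if avoids 0 m \<omega> then 1 else 0)
    * (\<lambda>r k. coord u k * (if r \<noteq> j then 1 else 0)) (J (Suc m) \<omega>) (incr S m \<omega>)" for \<omega>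
  have F_hist: "hist_determined (Suc m) F"
    unfolding F_def by (intro hist_determined_step_mult hist_determined_avoids) simp
  have [measurable]: "F \<in> borel_measurable (M j)"
    using F_hist j_in_E by (rule hist_determined_measurable)
  have split: "avoid_incr (coord u) 0 m \<omega> * avoid_incr (coord u) 0 (Suc (m + l)) \<omega>
      = F \<omega> * avoid_incr (coord u) (Suc m) l \<omega>" for \<omega> l
    using avoids_add[of 0 m "Suc l" \<omega>] by (simp add: avoid_incr_def F_def avoids_Suc)
  have "(\<integral>\<^sup>+\<omega>. avoid_incr (coord u) 0 m \<omega> * (\<Sum>l. avoid_incr (coord u) 0 (Suc (m + l)) \<omega>) \<partial>M j)
      = (\<integral>\<^sup>+\<omega>. (\<Sum>l. F \<omega> * avoid_incr (coord u) (Suc m) l \<omega>) \<partial>M j)"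
    by (intro nn_integral_cong) (simp only: split flip: ennreal_suminf_cmult)
  also have "\<dots> = (\<Sum>l. \<integral>\<^sup>+\<omega>. F \<omega> * avoid_incr (coord u) (Suc m) l \<omega> \<partial>M j)"
    by (rule nn_integral_suminf) (use j_in_E in measurable)
  also have "\<dots> = (\<Sum>l. \<integral>\<^sup>+\<omega>. F \<omega> * avoid_mean (coord u) l (J (Suc m) \<omega>) \<partial>M j)"
    by (simp add: nn_integral_avoid_incr[OF j_in_E F_hist])
  also have "\<dots> = (\<integral>\<^sup>+\<omega>. (\<Sum>l. F \<omega> * avoid_mean (coord u) l (J (Suc m) \<omega>)) \<partial>M j)"
    by (rule nn_integral_suminf[symmetric]) (use j_in_E in measurable)
  also have "\<dots> = (\<integral>\<^sup>+\<omega>. (if avoids 0 m \<omega>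
      then (\<lambda>r k. coord u k * (if r \<noteq> j then mean_return u r else 0)) (J (Suc m) \<omega>) (incr S m \<omega>) else 0) \<partial>M j)"
    by (intro nn_integral_cong) (simp add: F_def mean_return_def)
  also have "\<dots> = (\<Sum>i\<in>E. kernel_mean i (\<lambda>r k. coord u k * (if r \<noteq> j then mean_return u r else 0)) * visit_prob m i)"
    by (rule nn_integral_before_return_step)
  finally show ?thesis .
qed

lemma nn_integral_return_time_square:
  assumes returns: "AE \<omega> in M j. \<exists>l\<ge>1. J l \<omega> = j"
  shows "(\<integral>\<^sup>+\<omega>. (return_time u \<omega>)\<^sup>2 \<partial>M j)
       = (\<Sum>i\<in>E. visits i * (m2 s q u i
            + 2 * kernel_mean i (\<lambda>r k. coord u k * (if r \<noteq> j then mean_return u r else 0))))"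
proof -
  let ?W = "\<lambda>m. avoid_incr (coord u) 0 m"
  let ?g = "\<lambda>r k. coord u k * (if r \<noteq> j then mean_return u r else 0)"
  have "(\<integral>\<^sup>+\<omega>. (return_time u \<omega>)\<^sup>2 \<partial>M j)
      = (\<integral>\<^sup>+\<omega>. (\<Sum>m. ?W m \<omega> * ?W m \<omega> + 2 * (?W m \<omega> * (\<Sum>l. ?W (Suc (m + l)) \<omega>))) \<partial>M j)"
    using returns by (intro nn_integral_cong_AE) (auto simp: return_time_square)
  also have "\<dots> = (\<Sum>m. \<integral>\<^sup>+\<omega>. ?W m \<omega> * ?W m \<omega> + 2 * (?W m \<omega> * (\<Sum>l. ?W (Suc (m + l)) \<omega>)) \<partial>M j)"
    by (rule nn_integral_suminf) (use j_in_E in measurable)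
  also have "\<dots> = (\<Sum>m. \<Sum>i\<in>E. (m2 s q u i + 2 * kernel_mean i ?g) * visit_prob m i)"
    using j_in_E
    by (simp add: nn_integral_add nn_integral_cmult nn_integral_avoid_incr_square nn_integral_avoid_incr_cross
        sum_distrib_left sum.distrib[symmetric] algebra_simps)
  also have "\<dots> = (\<Sum>i\<in>E. visits i * (m2 s q u i + 2 * kernel_mean i ?g))"
    by (subst suminf_sum) (simp_all add: visits_def mult.commute)
  finally show ?thesis .
qed

lemma mu2_eq_sum_visits:
  assumes returns: "AE \<omega> in M j. \<exists>l\<ge>1. J l \<omega> = j"
  shows "mu2 M J S u j j = (\<Sum>i\<in>E. visits i * (m2 s q u i
           + 2 * (\<Sum>r\<in>E - {j}. ennreal (pker q i r) * m1 q u i r * mu1 M J S u r j)))"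
proof -
  have cross: "visits i * kernel_mean i (\<lambda>r k. coord u k * (if r \<noteq> j then mean_return u r else 0))
      = visits i * (\<Sum>r\<in>E - {j}. ennreal (pker q i r) * m1 q u i r * mu1 M J S u r j)"
    if i: "i \<in> E" for i
  proof -
    have "kernel_mean i (\<lambda>r k. coord u k * (if r \<noteq> j then mean_return u r else 0))
        = (\<Sum>r\<in>E. if r \<noteq> j then ennreal (pker q i r) * m1 q u i r * mean_return u r else 0)"
      unfolding kernel_mean_eq_sum[OF i] coord_def
      by (intro sum.cong refl) (simp add: mult.assoc[symmetric] nn_integral_multc nn_integral_q_coord_eq_m1[OF i])
    also have "\<dots> = (\<Sum>r\<in>E - {j}. ennreal (pker q i r) * m1 q u i r * mean_return u r)"
      by (rule sum.mono_neutral_cong_right) auto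
    finally have "visits i * kernel_mean i (\<lambda>r k. coord u k * (if r \<noteq> j then mean_return u r else 0))
        = (\<Sum>r\<in>E - {j}. m1 q u i r * (visits i * ennreal (pker q i r) * mean_return u r))"
      by (simp add: sum_distrib_left mult_ac)
    also have "\<dots> = (\<Sum>r\<in>E - {j}. m1 q u i r * (visits i * ennreal (pker q i r) * mu1 M J S u r j))"
      using visits_mult_mean_return_eq_mu1[OF returns i] by (intro sum.cong refl) simp
    finally show ?thesis
      by (simp add: sum_distrib_left mult_ac)
  qed
  have "mu2 M J S u j j = (\<integral>\<^sup>+\<omega>. (return_time u \<omega>)\<^sup>2 \<partial>M j)"
    unfolding mu2_def using returns
    by (intro nn_integral_cong_AE) (auto simp: Tret_eq_return_time[OF j_in_E])
  also have "\<dots> = (\<Sum>i\<in>E. visits i * (m2 s q u i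
      + 2 * kernel_mean i (\<lambda>r k. coord u k * (if r \<noteq> j then mean_return u r else 0))))"
    by (rule nn_integral_return_time_square[OF returns])
  also have "\<dots> = (\<Sum>i\<in>E. visits i * (m2 s q u i
      + 2 * (\<Sum>r\<in>E - {j}. ennreal (pker q i r) * m1 q u i r * mu1 M J S u r j)))"
    using cross by (intro sum.cong refl) (simp add: distrib_left mult.left_commute[of "visits _"])
  finally show ?thesis .
qed

end

theorem corollary5:
  fixes s :: nat
    and q :: "nat \<Rightarrow> nat \<Rightarrow> nat^'d \<Rightarrow> real"
    and M :: "nat \<Rightarrow> 'w measure"
    and J :: "nat \<Rightarrow> 'w \<Rightarrow> nat"
    and S :: "nat \<Rightarrow> 'w \<Rightarrow> nat^'d"
    and \<nu> :: "nat \<Rightarrow> real"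
  assumes "s \<ge> 1"
    and "MTMRC s q M J S"
    and "irreducible_J s q"
    and "ergodic s M J S"
    and "stationary s q \<nu>"
    and "j \<in> stE s"
  shows "mu2 M J S u j j =
           (\<Sum>i\<in>stE s. ennreal (\<nu> i) * m2 s q u i) / ennreal (\<nu> j)
         + 2 * (\<Sum>i\<in>stE s. \<Sum>r\<in>stE s - {j}.
                  ennreal (\<nu> i) * ennreal (pker q i r) * m1 q u i r * mu1 M J S u r j)
             / ennreal (\<nu> j)"
proof -
  interpret excursion s q M J S j
    using assms(2,6) by unfold_locales
  have returns: "AE \<omega> in M j. \<exists>l\<ge>1. J l \<omega> = j"
  proof -
    have "AE \<omega> in M j. Tret J S u j \<omega> < \<infinity>"
      using assms(4,6) unfolding ergodic_def by blast
    then show ?thesis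
      by eventually_elim (auto simp: Tret_def split: if_splits)
  qed
  have "visits i = ennreal (\<nu> i) / ennreal (\<nu> j)" if "i \<in> E" for i
    using pker_invariant_eq_stationary_ratio[OF assms(3,5) visits_pker_invariant[OF returns] assms(6) visits_j that]
      stationary_pos[OF assms(3,5) that] stationary_pos[OF assms(3,5,6)]
    by (simp add: divide_ennreal)
  then show ?thesis
    unfolding mu2_eq_sum_visits[OF returns]
    by (simp add: divide_ennreal_def sum_distrib_left sum_distrib_right sum.distrib distrib_left mult_ac cong: sum.cong)
qed

end
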